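(* Let $r_{\min}>0$ and let $P=(P_x,P_y,P_\theta)$ with $(P_x,P_y)\in\mathbb{R}^2$ and $P_\theta\in[0,2\pi)$ be a start configuration. Let $\mathcal{G}_\infty=\{(x,y)\in\mathbb{R}^2 : y=\mathcal{G}_y\}$ be a horizontal line with $\mathcal{G}_y>P_y$. Define $$m=\begin{cases}+1, & P_\theta\in[0,\tfrac{\pi}{2}]\cup[\tfrac{3\pi}{2},2\pi),\\ -1, & \text{otherwise},\end{cases}\qquad n=\begin{cases}0, & P_\theta\in[0,\tfrac{\pi}{2}],\\ \pi, & P_\theta\in(\tfrac{\pi}{2},\tfrac{3\pi}{2}],\\ 2\pi, & P_\theta\in(\tfrac{3\pi}{2},2\pi),\end{cases}$$ and $o_y=P_y+m\,r_{\min}\cos(P_\theta)$ (this is the $y$-coordinate of the center $o$ of the circle of radius $r_{\min}$ through $(P_x,P_y)$, tangent to the heading $P_\theta$, on which the vehicle rotates its heading toward $\pi/2$ by the shorter rotation). Consider all feasible paths (in the sense of the unicycle model below) starting at configuration $P$ and ending at any point of $\mathcal{G}_\infty$, with arbitrary final heading. Then a shortest such path exists and it is a Dubins path of the following form: 1. If $o_y\le \mathcal{G}_y$, it consists of a circular arc of radius $r_{\min}$ (turning the heading toward $\pi/2$ by the shorter rotation) followed by a straight segment, and the straight segment meets $\mathcal{G}_\infty$ at a right angle (i.e. has heading $\pi/2$). 2. If $o_y>\mathcal{G}_y$, it consists of a single circular arc of radius $r_{\min}$. Moreover, the length $h(P)$ of this shortest path is $$h(P)=\begin{cases} h_1(P)=r_{\min}\min\!\left(\left|P_\theta-\tfrac{\pi}{2}\right|,\left|P_\theta-\tfrac{5\pi}{2}\right|\right)+\mathcal{G}_y-o_y,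 & \text{if } o_y\le \mathcal{G}_y,\\[4pt] h_2(P)=r_{\min}\left|P_\theta-m\arccos\!\left(\dfrac{o_y-\mathcal{G}_y}{r_{\min}}\right)-n\right|, & \text{if } o_y>\mathcal{G}_y.\end{cases}$$
   Context: Vehicle model (forward-moving unicycle / Dubins car): a path is a curve $s\mapsto (x(s),y(s),\theta(s))$ parameterized by arc length $s\in[0,s_f]$ satisfying $\dot x(s)=\cos\theta(s)$, $\dot y(s)=\sin\theta(s)$, $\dot\theta(s)=\kappa(s)$ with $|\kappa(s)|\le \kappa_{\max}$, where derivatives are with respect to arc length and $r_{\min}=\kappa_{\max}^{-1}$ is the minimum turning radius. Such a path is called feasible; its length is $s_f$. Headings are angles in $[0,2\pi)$ measured from the positive $x$-axis. A Dubins path is a path composed of circular arcs of radius $r_{\min}$ ("C") and straight line segments ("S"). In the application, $\mathcal{G}_\infty$ is the line containing a goal segment located ahead of the vehicle (hence $\mathcal{G}_y>P_y$), and $h(P)$ is used as an admissible heuristic for A* search. *)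

theory Defs
  imports Complex_Main
begin

text \<open>A feasible path of length sf (arc-length parametrised) for the forward-moving
unicycle with minimum turning radius rmin: x' = cos th, y' = sin th on [0,sf], and
th' = kappa with |kappa| <= 1/rmin, rendered as th being (1/rmin)-Lipschitz on [0,sf]
(equivalently absolutely continuous with a.e. derivative bounded by 1/rmin).\<close>
definition feasible_path ::
  "real \<Rightarrow> real \<Rightarrow> (real \<Rightarrow> real) \<Rightarrow> (real \<Rightarrow> real) \<Rightarrow> (real \<Rightarrow> real) \<Rightarrow> bool" where
  "feasible_path rmin sf x y th \<longleftrightarrow>
     0 \<le> sf \<and>
     (\<forall>s\<in>{0..sf}. (x has_real_derivative cos (th s)) (at s within {0..sf}) \<and>
                   (y has_real_derivative sin (th s)) (at s within {0..sf})) \<and>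
     (\<forall>s\<in>{0..sf}. \<forall>t\<in>{0..sf}. \<bar>th s - th t\<bar> \<le> \<bar>s - t\<bar> / rmin)"

definition path_to_line ::
  "real \<Rightarrow> real \<Rightarrow> real \<Rightarrow> real \<Rightarrow> real \<Rightarrow> real \<Rightarrow>
   (real \<Rightarrow> real) \<Rightarrow> (real \<Rightarrow> real) \<Rightarrow> (real \<Rightarrow> real) \<Rightarrow> bool" where
  "path_to_line rmin Px Py Pth Gy sf x y th \<longleftrightarrow>
     feasible_path rmin sf x y th \<and> x 0 = Px \<and> y 0 = Py \<and> th 0 = Pth \<and> y sf = Gy"

definition m_sign :: "real \<Rightarrow> real" where
  "m_sign Pth = (if Pth \<in> {0..pi/2} \<union> {3*pi/2..<2*pi} then 1 else -1)"

definition n_off :: "real \<Rightarrow> real" where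
  "n_off Pth = (if Pth \<in> {0..pi/2} then 0
                else if Pth \<in> {pi/2<..3*pi/2} then pi else 2*pi)"

definition o_y :: "real \<Rightarrow> real \<Rightarrow> real \<Rightarrow> real" where
  "o_y rmin Py Pth = Py + m_sign Pth * rmin * cos Pth"

definition h1 :: "real \<Rightarrow> real \<Rightarrow> real \<Rightarrow> real \<Rightarrow> real" where
  "h1 rmin Py Pth Gy =
     rmin * min \<bar>Pth - pi/2\<bar> \<bar>Pth - 5*pi/2\<bar> + Gy - o_y rmin Py Pth"

definition h2 :: "real \<Rightarrow> real \<Rightarrow> real \<Rightarrow> real \<Rightarrow> real" where
  "h2 rmin Py Pth Gy =
     rmin * \<bar>Pth - m_sign Pth * arccos ((o_y rmin Py Pth - Gy) / rmin) - n_off Pth\<bar>"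

definition h_heur :: "real \<Rightarrow> real \<Rightarrow> real \<Rightarrow> real \<Rightarrow> real" where
  "h_heur rmin Py Pth Gy =
     (if o_y rmin Py Pth \<le> Gy then h1 rmin Py Pth Gy else h2 rmin Py Pth Gy)"

end

(* Along a feasible path the heading after arc length s differs from the start heading by at
   most s/rmin. With d the angle from the start heading to the upward direction, this gives
   sin th(s) <= cos (max (d - s/rmin) 0). The path that turns at full curvature towards the
   upward direction and then drives straight attains this bound for every s, so its height
   dominates that of every feasible path at equal arc length, and its first hitting time of the
   line is the minimal length. The line is reached either on the straight part (h1) or already
   during the turn (h2). *)

theory Submission
  imports Defs "HOL-Analysis.Analysis"
begin

lemma DERIV_le_imp_diff_le:
  fixes f g f' g' :: "real \<Rightarrow> real"
  assumes "p \<le> q"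
    and f: "\<And>x. x \<in> {p..q} \<Longrightarrow> (f has_real_derivative f' x) (at x within {p..q})"
    and g: "\<And>x. x \<in> {p..q} \<Longrightarrow> (g has_real_derivative g' x) (at x within {p..q})"
    and "\<And>x. x \<in> {p..q} \<Longrightarrow> f' x \<le> g' x"
  shows "f q - f p \<le> g q - g p"
proof (rule has_integral_le)
  show "(f' has_integral f q - f p) {p..q}" "(g' has_integral g q - g p) {p..q}"
    using f g \<open>p \<le> q\<close>
    by (auto intro!: fundamental_theorem_of_calculus
        simp: has_real_derivative_iff_has_vector_derivative[symmetric])
qed (use assms in auto)

lemma DERIV_eq_imp_diff_eq:
  fixes f g f' :: "real \<Rightarrow> real"
  assumes "p \<le> q"
    and "\<And>x. x \<in> {p..q} \<Longrightarrow> (f has_real_derivative f' x) (at x within {p..q})"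
    and "\<And>x. x \<in> {p..q} \<Longrightarrow> (g has_real_derivative f' x) (at x within {p..q})"
  shows "f q - f p = g q - g p"
  using DERIV_le_imp_diff_le[of p q f f' g f'] DERIV_le_imp_diff_le[of p q g f' f f'] assms
  by fastforce

lemma cos_le_cos_max_diff:
  fixes u v \<delta> :: real
  assumes "\<bar>v\<bar> \<le> pi" and "\<bar>u - v\<bar> \<le> \<delta>"
  shows "cos u \<le> cos (max (\<bar>v\<bar> - \<delta>) 0)"
proof (cases "\<bar>v\<bar> \<le> \<delta>")
  case False
  define e where "e = \<bar>v\<bar> - \<delta>"
  have e: "0 \<le> e" "e \<le> pi" "e \<le> \<bar>u\<bar>" "\<bar>u\<bar> \<le> 2*pi - e"
    using assms False unfolding e_def by linarith+
  have "cos u = cos \<bar>u\<bar>"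
    by (simp add: abs_if)
  also have "\<dots> \<le> cos e"
  proof (cases "\<bar>u\<bar> \<le> pi")
    case True
    then show ?thesis
      using e cos_monotone_0_pi_le by blast
  next
    case False
    have "cos \<bar>u\<bar> = cos (2*pi - \<bar>u\<bar>)"
      by (simp add: cos_diff)
    also have "\<dots> \<le> cos e"
      using e False by (intro cos_monotone_0_pi_le) auto
    finally show ?thesis .
  qed
  finally show ?thesis
    using False by (simp add: e_def)
qed simp

lemma arcsin_lt_of_lt_sin:
  fixes c d :: real
  assumes "0 \<le> c" and "c < sin d" and "0 \<le> d" and "d \<le> pi"
  shows "arcsin c < d"
proof (cases "d \<le> pi/2")
  case True
  have "arcsin c < arcsin (sin d)"
    using assms sin_le_one[of d] by (intro arcsin_less_arcsin) auto
  then show ?thesis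
    using True assms by (simp add: arcsin_sin)
next
  case False
  have "c \<le> 1"
    using assms(2) sin_le_one[of d] by linarith
  then have "arcsin c \<le> pi/2"
    using assms(1) by (intro arcsin_ubound) auto
  then show ?thesis
    using False by linarith
qed

lemma sin_gt_of_arcsin_lt:
  fixes c d x :: real
  assumes "0 \<le> c" and "c < sin d" and "d \<le> pi" and "arcsin c < x" and "x \<le> d"
  shows "c < sin x"
proof (cases "x \<le> pi/2")
  case True
  have "c \<le> 1"
    using assms sin_le_one[of d] by linarith
  moreover have "sin (arcsin c) < sin x"
    using True assms arcsin_lbound[of c] \<open>c \<le> 1\<close> by (intro sin_monotone_2pi) auto
  ultimately show ?thesis
    using assms by simp
next
  case False
  have "sin (pi - d) \<le> sin (pi - x)"
    using False assms by (intro sin_monotone_2pi_le) auto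
  then show ?thesis
    using assms by simp
qed

lemma m_sign_cases: "m_sign Pth = 1 \<or> m_sign Pth = -1"
  by (simp add: m_sign_def)

text \<open>T is the upward heading (pi/2, or 5pi/2 when the start heading lies beyond 3pi/2) and d
  the angle the shorter rotation turns through to reach it.\<close>
lemma heading_normal_form:
  assumes P: "Pth \<in> {0..<2*pi}"
  obtains T d where "sin T = 1" "cos T = 0" "0 \<le> d" "d \<le> pi" "Pth = T - m_sign Pth * d"
    "min \<bar>Pth - pi/2\<bar> \<bar>Pth - 5*pi/2\<bar> = d"
    "\<And>rmin Py. o_y rmin Py Pth = Py + rmin * sin d"
    "\<And>c. d < pi \<Longrightarrow> -1 \<le> c \<Longrightarrow> c \<le> 1 \<Longrightarrow>
       \<bar>Pth - m_sign Pth * arccos c - n_off Pth\<bar> = \<bar>d - arcsin c\<bar>"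
proof
  define T where "T = (if Pth < 3*pi/2 then pi/2 else 5*pi/2)"
  define m where "m = m_sign Pth"
  define d where "d = m * (T - Pth)"
  have m: "m = 1 \<or> m = -1"
    unfolding m_def by (rule m_sign_cases)
  show Pth: "Pth = T - m_sign Pth * d"
    using m by (auto simp: d_def m_def)
  have five: "5*pi/2 = pi/2 + 2*pi"
    by simp
  have "sin (5*pi/2) = 1" "cos (5*pi/2) = 0"
    unfolding five by (simp_all only: sin_periodic cos_periodic) simp_all
  then show sT: "sin T = 1" and cT: "cos T = 0"
    by (simp_all add: T_def)
  consider "Pth \<le> pi/2" | "pi/2 < Pth" "Pth < 3*pi/2" | "3*pi/2 \<le> Pth"
    by linarith
  then have "0 \<le> d \<and> d \<le> pi \<and> min \<bar>Pth - pi/2\<bar> \<bar>Pth - 5*pi/2\<bar> = d"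
    by cases (use P in \<open>simp_all add: T_def m_def d_def m_sign_def\<close>)
  then show "0 \<le> d" "d \<le> pi" "min \<bar>Pth - pi/2\<bar> \<bar>Pth - 5*pi/2\<bar> = d"
    by auto
  have "cos Pth = cos (T - m * d)"
    using Pth m_def by metis
  also have "\<dots> = sin (m * d)"
    using sT cT by (simp add: cos_diff)
  finally have "cos Pth = sin (m * d)" .
  then have "m * cos Pth = sin d"
    using m by auto
  then show "o_y rmin Py Pth = Py + rmin * sin d" for rmin Py
    by (simp add: o_y_def m_def[symmetric])
  fix c :: real
  assume "d < pi" "-1 \<le> c" "c \<le> 1"
  then have ac: "arccos c = pi/2 - arcsin c"
    by (simp add: arccos_arcsin_eq)
  have "Pth \<noteq> 3*pi/2"
  proof
    assume "Pth = 3*pi/2"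
    then have "d = pi"
      using P by (auto simp: d_def m_def T_def m_sign_def)
    with \<open>d < pi\<close> show False
      by simp
  qed
  then consider "Pth \<le> pi/2" | "pi/2 < Pth" "Pth < 3*pi/2" | "3*pi/2 < Pth"
    by fastforce
  then show "\<bar>Pth - m_sign Pth * arccos c - n_off Pth\<bar> = \<bar>d - arcsin c\<bar>"
    by cases
      (use P in \<open>simp_all add: T_def m_def d_def m_sign_def n_off_def ac abs_minus_commute\<close>)
qed

locale full_turn_then_straight =
  fixes rmin Px Py Pth T m d :: real
  assumes rmin_pos: "0 < rmin"
    and sin_T: "sin T = 1" and cos_T: "cos T = 0"
    and m_cases: "m = 1 \<or> m = -1"
    and d_nonneg: "0 \<le> d" and d_le_pi: "d \<le> pi"
    and start_heading: "Pth = T - m * d"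
begin

definition turn_len :: real where
  "turn_len = rmin * d"

definition heading :: "real \<Rightarrow> real" where
  "heading s = Pth + m * (min s turn_len / rmin)"

definition xpos :: "real \<Rightarrow> real" where
  "xpos s = Px + integral {0..s} (\<lambda>u. cos (heading u))"

definition ypos :: "real \<Rightarrow> real" where
  "ypos s = Py + integral {0..s} (\<lambda>u. sin (heading u))"

definition center_y :: real where
  "center_y = Py + rmin * sin d"

lemma turn_len_nonneg: "0 \<le> turn_len"
  using rmin_pos d_nonneg by (simp add: turn_len_def)

lemma heading_eq: "heading s = T - m * max (d - s / rmin) 0"
proof -
  have "min s turn_len / rmin = min (s / rmin) d"
    using rmin_pos by (simp add: turn_len_def min_def divide_right_mono field_simps)
  then have "heading s = T - m * (d - min (s / rmin) d)"
    using start_heading unfolding heading_def by (simp only:) (simp add: algebra_simps)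
  also have "d - min (s / rmin) d = max (d - s / rmin) 0"
    by (simp add: min_def max_def)
  finally show ?thesis .
qed

lemma sin_heading: "sin (heading s) = cos (max (d - s / rmin) 0)"
  using m_cases by (auto simp: heading_eq sin_diff sin_T cos_T)

lemma heading_lipschitz: "\<bar>heading s - heading t\<bar> \<le> \<bar>s - t\<bar> / rmin"
proof -
  have "\<bar>heading s - heading t\<bar> = \<bar>min s turn_len - min t turn_len\<bar> / rmin"
    using m_cases rmin_pos by (auto simp: heading_def abs_divide diff_divide_distrib[symmetric]
        right_diff_distrib[symmetric] abs_minus_commute)
  also have "\<dots> \<le> \<bar>s - t\<bar> / rmin"
    using rmin_pos by (intro divide_right_mono) (auto simp: min_def)
  finally show ?thesis .
qed

lemma continuous_on_heading: "continuous_on S heading"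
  unfolding heading_def by (intro continuous_intros) (use rmin_pos in auto)

lemma has_real_derivative_xpos:
  "s \<in> {0..b} \<Longrightarrow> (xpos has_real_derivative cos (heading s)) (at s within {0..b})"
  unfolding xpos_def
  by (rule DERIV_add[OF DERIV_const integral_has_real_derivative, simplified])
     (auto intro!: continuous_intros continuous_on_heading)

lemma has_real_derivative_ypos:
  "s \<in> {0..b} \<Longrightarrow> (ypos has_real_derivative sin (heading s)) (at s within {0..b})"
  unfolding ypos_def
  by (rule DERIV_add[OF DERIV_const integral_has_real_derivative, simplified])
     (auto intro!: continuous_intros continuous_on_heading)

lemma sin_le_sin_heading:
  assumes "\<bar>\<phi> - Pth\<bar> \<le> s / rmin"
  shows "sin \<phi> \<le> sin (heading s)"
proof -
  have "sin \<phi> = cos (\<phi> - T)"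
    using sin_T cos_T by (simp add: cos_diff)
  also have "\<dots> \<le> cos (max (\<bar>Pth - T\<bar> - s / rmin) 0)"
    using assms m_cases d_nonneg d_le_pi start_heading
    by (intro cos_le_cos_max_diff) auto
  also have "\<bar>Pth - T\<bar> = d"
    using m_cases d_nonneg start_heading by auto
  finally show ?thesis
    by (simp add: sin_heading)
qed

lemma feasible_y_le_ypos:
  assumes "feasible_path rmin sf x y th" and "y 0 = Py" and "th 0 = Pth"
  shows "y sf \<le> ypos sf"
proof -
  have sf: "0 \<le> sf"
    and y: "\<And>u. u \<in> {0..sf} \<Longrightarrow> (y has_real_derivative sin (th u)) (at u within {0..sf})"
    and lip: "\<And>u t. u \<in> {0..sf} \<Longrightarrow> t \<in> {0..sf} \<Longrightarrow> \<bar>th u - th t\<bar> \<le> \<bar>u - t\<bar> / rmin"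
    using assms(1) unfolding feasible_path_def by auto
  have "y sf - y 0 \<le> ypos sf - ypos 0"
  proof (rule DERIV_le_imp_diff_le[OF sf y has_real_derivative_ypos])
    show "sin (th u) \<le> sin (heading u)" if "u \<in> {0..sf}" for u
      using lip[OF that, of 0] that sf assms(3) by (intro sin_le_sin_heading) auto
  qed
  then show ?thesis
    using assms(2) by (simp add: ypos_def)
qed

lemma ypos_turn:
  assumes "0 \<le> s" and "s \<le> turn_len"
  shows "ypos s = center_y - rmin * sin (d - s / rmin)"
proof -
  define C where "C u = - rmin * sin (d - u / rmin)" for u
  have C: "(C has_real_derivative sin (heading u)) (at u within {0..s})" if "u \<in> {0..s}" for u
  proof -
    have "sin (heading u) = cos (d - u / rmin)"
      using that assms rmin_pos by (simp add: sin_heading turn_len_def field_simps)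
    then show ?thesis
      unfolding C_def using rmin_pos by (auto intro!: derivative_eq_intros)
  qed
  have "ypos s - ypos 0 = C s - C 0"
    using DERIV_eq_imp_diff_eq[OF assms(1) has_real_derivative_ypos C] by simp
  then show ?thesis
    by (simp add: C_def ypos_def center_y_def)
qed

lemma ypos_straight:
  assumes "turn_len \<le> s"
  shows "ypos s = center_y + (s - turn_len)"
proof -
  have "(ypos has_real_derivative 1) (at u within {turn_len..s})" if "u \<in> {turn_len..s}" for u
  proof -
    have "sin (heading u) = 1"
      using that rmin_pos by (simp add: sin_heading turn_len_def field_simps)
    then show ?thesis
      using has_real_derivative_ypos[of u s] that turn_len_nonneg by (auto intro: DERIV_subset)
  qed
  then have "ypos s - ypos turn_len = (\<lambda>u. u) s - (\<lambda>u. u) turn_len"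
    using assms by (intro DERIV_eq_imp_diff_eq) (auto intro!: derivative_eq_intros)
  moreover have "ypos turn_len = center_y"
    using ypos_turn[OF turn_len_nonneg order_refl] rmin_pos by (simp add: turn_len_def)
  ultimately show ?thesis
    by simp
qed

lemma heading_turning: "s \<le> turn_len \<Longrightarrow> heading s = Pth + m * s / rmin"
  by (simp add: heading_def)

lemma heading_straight: "turn_len \<le> s \<Longrightarrow> heading s = T"
  using rmin_pos by (simp add: heading_eq turn_len_def field_simps)

lemma greedy_path_shortest:
  assumes "0 \<le> h" and "ypos h = Gy" and below: "\<And>t. 0 \<le> t \<Longrightarrow> t < h \<Longrightarrow> ypos t < Gy"
  shows "path_to_line rmin Px Py Pth Gy h xpos ypos heading \<and>
    (\<forall>sf x y th. path_to_line rmin Px Py Pth Gy sf x y th \<longrightarrow> h \<le> sf)"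
proof (intro conjI allI impI)
  show "path_to_line rmin Px Py Pth Gy h xpos ypos heading"
    unfolding path_to_line_def feasible_path_def
    using assms turn_len_nonneg heading_lipschitz has_real_derivative_xpos has_real_derivative_ypos
    by (auto simp: heading_def xpos_def ypos_def)
next
  fix sf x y th
  assume "path_to_line rmin Px Py Pth Gy sf x y th"
  then have "feasible_path rmin sf x y th" "y 0 = Py" "th 0 = Pth" "y sf = Gy" "0 \<le> sf"
    unfolding path_to_line_def feasible_path_def by auto
  then show "h \<le> sf"
    using feasible_y_le_ypos below[of sf] by fastforce
qed

lemma first_hit_after_turn:
  assumes "center_y \<le> Gy" and "Py < Gy"
  shows "ypos (turn_len + (Gy - center_y)) = Gy"
    and "\<And>t. 0 \<le> t \<Longrightarrow> t < turn_len + (Gy - center_y) \<Longrightarrow> ypos t < Gy"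
proof -
  show "ypos (turn_len + (Gy - center_y)) = Gy"
    using assms(1) by (simp add: ypos_straight)
  fix t
  assume t: "0 \<le> t" "t < turn_len + (Gy - center_y)"
  consider "turn_len \<le> t" | "t = 0" | "0 < t" "t < turn_len"
    using t by linarith
  then show "ypos t < Gy"
  proof cases
    case 1
    then show ?thesis
      using t by (simp add: ypos_straight)
  next
    case 2
    then show ?thesis
      using assms(2) by (simp add: ypos_def)
  next
    case 3
    then have "0 < t / rmin" "t / rmin < d"
      using rmin_pos by (simp_all add: turn_len_def field_simps)
    then have "0 < d - t / rmin" "d - t / rmin < pi"
      using d_le_pi by linarith+
    then have "0 < rmin * sin (d - t / rmin)"
      using rmin_pos by (simp add: sin_gt_zero)
    then show ?thesis
      using 3 assms(1) by (simp add: ypos_turn)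
  qed
qed

lemma turn_ratio_bounds:
  assumes "Gy < center_y" and "Py < Gy"
  shows "0 < (center_y - Gy) / rmin" and "(center_y - Gy) / rmin < sin d" and "d < pi"
proof -
  show "0 < (center_y - Gy) / rmin" "(center_y - Gy) / rmin < sin d"
    using assms rmin_pos by (simp_all add: center_y_def field_simps)
  then show "d < pi"
    using d_le_pi by (cases "d = pi") auto
qed

lemma first_hit_during_turn:
  assumes "Gy < center_y" and "Py < Gy"
  defines "q \<equiv> arcsin ((center_y - Gy) / rmin)"
  shows "q < d" and "rmin * (d - q) \<le> turn_len"
    and "ypos (rmin * (d - q)) = Gy"
    and "\<And>t. 0 \<le> t \<Longrightarrow> t < rmin * (d - q) \<Longrightarrow> ypos t < Gy"
proof -
  define c where "c = (center_y - Gy) / rmin"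
  have q: "q = arcsin c"
    by (simp add: q_def c_def)
  have c: "0 < c" "c < sin d"
    using turn_ratio_bounds[OF assms(1,2)] by (simp_all add: c_def)
  then have "c \<le> 1"
    using sin_le_one[of d] by linarith
  then have "0 \<le> q" and sin_q: "sin q = c"
    using c by (simp_all add: q arcsin_nonneg)
  then show "rmin * (d - q) \<le> turn_len"
    using rmin_pos by (simp add: turn_len_def right_diff_distrib)
  show "q < d"
    unfolding q using c d_nonneg d_le_pi by (intro arcsin_lt_of_lt_sin) auto
  have ypos_eq: "ypos t = center_y - rmin * sin (d - t / rmin)"
    if "0 \<le> t" "t \<le> rmin * (d - q)" for t
    using that \<open>rmin * (d - q) \<le> turn_len\<close> by (intro ypos_turn) auto
  have "ypos (rmin * (d - q)) = center_y - rmin * sin q"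
    using ypos_eq[of "rmin * (d - q)"] \<open>q < d\<close> rmin_pos by simp
  also have "\<dots> = Gy"
    using rmin_pos by (simp add: sin_q c_def)
  finally show "ypos (rmin * (d - q)) = Gy" .
  fix t
  assume t: "0 \<le> t" "t < rmin * (d - q)"
  then have "arcsin c < d - t / rmin" "d - t / rmin \<le> d"
    using rmin_pos by (simp_all add: q[symmetric] field_simps)
  then have "c < sin (d - t / rmin)"
    using sin_gt_of_arcsin_lt[of c d "d - t / rmin"] c d_le_pi by auto
  then show "ypos t < Gy"
    using t rmin_pos by (simp add: ypos_eq c_def field_simps)
qed

end

theorem mainTheorem1:
  fixes rmin Px Py Pth Gy :: real
  assumes "rmin > 0" and "Pth \<in> {0..<2*pi}" and "Gy > Py"
  shows "\<exists>sf x y th.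
           path_to_line rmin Px Py Pth Gy sf x y th \<and>
           (\<forall>sf' x' y' th'. path_to_line rmin Px Py Pth Gy sf' x' y' th' \<longrightarrow> sf \<le> sf') \<and>
           sf = h_heur rmin Py Pth Gy \<and>
           (o_y rmin Py Pth \<le> Gy \<longrightarrow>
              (\<exists>a. 0 \<le> a \<and> a \<le> sf \<and>
                 (\<forall>s\<in>{0..a}. th s = Pth + m_sign Pth * s / rmin) \<and>
                 (\<forall>s\<in>{a..sf}. th s = th a) \<and>
                 cos (th a) = 0 \<and> sin (th a) = 1)) \<and>
           (Gy < o_y rmin Py Pth \<longrightarrow>
              (\<exists>\<sigma>\<in>{-1, 1::real}. \<forall>s\<in>{0..sf}. th s = Pth + \<sigma> * s / rmin))"
proof -
  obtain T d where T: "sin T = 1" "cos T = 0" and d: "0 \<le> d" "d \<le> pi"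
    and Pth: "Pth = T - m_sign Pth * d"
    and turn_angle: "min \<bar>Pth - pi/2\<bar> \<bar>Pth - 5*pi/2\<bar> = d"
    and oy: "\<And>rmin Py. o_y rmin Py Pth = Py + rmin * sin d"
    and arc_angle: "\<And>c. d < pi \<Longrightarrow> -1 \<le> c \<Longrightarrow> c \<le> 1 \<Longrightarrow>
               \<bar>Pth - m_sign Pth * arccos c - n_off Pth\<bar> = \<bar>d - arcsin c\<bar>"
    using heading_normal_form[OF assms(2)] by blast
  interpret full_turn_then_straight rmin Px Py Pth T "m_sign Pth" d
    using assms(1) T d Pth m_sign_cases by unfold_locales auto
  have oy_eq: "o_y rmin Py Pth = center_y"
    by (simp add: oy center_y_def)
  show ?thesis
  proof (cases "center_y \<le> Gy")
    case True
    let ?h = "turn_len + (Gy - center_y)"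
    have h: "?h = h_heur rmin Py Pth Gy" "0 \<le> ?h"
      using True turn_len_nonneg by (simp_all add: h_heur_def h1_def turn_angle oy_eq turn_len_def)
    show ?thesis
      by (rule exI[of _ ?h], rule exI[of _ xpos], rule exI[of _ ypos], rule exI[of _ heading])
        (use h greedy_path_shortest[of ?h] first_hit_after_turn[OF True assms(3)] True
           turn_len_nonneg heading_turning heading_straight heading_straight[OF order_refl] T
         in \<open>auto simp: oy_eq intro!: exI[of _ turn_len]\<close>)
  next
    case False
    let ?c = "(center_y - Gy) / rmin"
    let ?h = "rmin * (d - arcsin ?c)"
    have c: "0 < ?c" "?c < sin d" "d < pi"
      using turn_ratio_bounds[OF _ assms(3)] False by auto
    note hit = first_hit_during_turn[OF _ assms(3)]
    have "\<bar>Pth - m_sign Pth * arccos ?c - n_off Pth\<bar> = d - arcsin ?c"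
      using arc_angle[of ?c] c sin_le_one[of d] hit(1) False by simp
    then have h: "?h = h_heur rmin Py Pth Gy" "0 \<le> ?h"
      using False hit(1) assms(1) by (simp_all add: h_heur_def h2_def oy_eq)
    show ?thesis
      by (rule exI[of _ ?h], rule exI[of _ xpos], rule exI[of _ ypos], rule exI[of _ heading])
        (use h greedy_path_shortest[of ?h] hit False heading_turning m_sign_cases[of Pth]
         in \<open>auto simp: oy_eq intro!: bexI[of _ "m_sign Pth"]\<close>)
  qed
qed

end
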